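(* Let $S$ be a submonoid of $\mathbb N^d$. Then $S$ is a PI-monoid if and only if $m(S)\in S\setminus\{0\}$ and $(S\setminus\{0\})-m(S)=\{\mathbf s-m(S):\mathbf s\in S\setminus\{0\}\}$ is a submonoid of $\mathbb N^d$.
   Context: $\preceq_{\mathbb N^d}$ is the componentwise partial order on $\mathbb N^d$; the multiplicity of $S$ is $m(S)=\inf_{\preceq_{\mathbb N^d}}(S\setminus\{0\})$. $S$ is a PI-monoid if there exist a submonoid $T$ of $\mathbb N^d$ and $\mathbf a\in T\setminus\{0\}$ with $S=(\mathbf a+T)\cup\{0\}$. *)

theory Defs
  imports Main "HOL-Library.Function_Algebras"
begin

text \<open>Elements of N^d are modelled as functions 'd \<Rightarrow> nat for a finite index type 'd.
  Addition/zero are pointwise (Function_Algebras); the order \<le> on functions is the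
  pointwise (componentwise) order.\<close>

definition submonoid :: "('d::finite \<Rightarrow> nat) set \<Rightarrow> bool" where
  "submonoid T \<longleftrightarrow> 0 \<in> T \<and> (\<forall>x\<in>T. \<forall>y\<in>T. x + y \<in> T)"

definition is_inf_cw :: "('d::finite \<Rightarrow> nat) set \<Rightarrow> ('d \<Rightarrow> nat) \<Rightarrow> bool" where
  "is_inf_cw A m \<longleftrightarrow> (\<forall>s\<in>A. m \<le> s) \<and> (\<forall>l. (\<forall>s\<in>A. l \<le> s) \<longrightarrow> l \<le> m)"

definition multiplicity_mon :: "('d::finite \<Rightarrow> nat) set \<Rightarrow> ('d \<Rightarrow> nat)" where
  "multiplicity_mon S = (THE m. is_inf_cw (S - {0}) m)"

definition PI_monoid :: "('d::finite \<Rightarrow> nat) set \<Rightarrow> bool" where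
  "PI_monoid S \<longleftrightarrow> (\<exists>T a. submonoid T \<and> a \<in> T \<and> a \<noteq> 0 \<and> S = ((\<lambda>t. a + t) ` T) \<union> {0})"

end

theory Submission
  imports Defs
begin

text \<open>If \<open>S = (a + T) \<union> {0}\<close> with \<open>0 \<in> T\<close>, then \<open>a\<close> is the least nonzero element of \<open>S\<close>, so
  \<open>m(S) = a\<close> and subtracting it recovers \<open>T\<close>. Conversely, when \<open>m = m(S)\<close> lies in \<open>S\<close>,
  every nonzero \<open>s \<in> S\<close> satisfies \<open>m \<le> s\<close>, so \<open>s = m + (s - m)\<close> and \<open>S\<close> is the shift by \<open>m\<close> of
  \<open>T = (S \<setminus> {0}) - m\<close>; moreover \<open>m \<in> T\<close> because \<open>m = (m + m) - m\<close>.\<close>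

lemma is_inf_cw_pointwise_Inf:
  fixes A :: "('d::finite \<Rightarrow> nat) set"
  assumes "A \<noteq> {}"
  shows "is_inf_cw A (\<lambda>i. Inf ((\<lambda>s. s i) ` A))"
  using assms unfolding is_inf_cw_def le_fun_def
  by (auto intro: cInf_lower cInf_greatest)

lemma is_inf_cw_unique:
  assumes "is_inf_cw A m" "is_inf_cw A m'"
  shows "m = m'"
  using assms unfolding is_inf_cw_def by (meson antisym)

lemma multiplicity_mon_eqI:
  assumes "is_inf_cw (S - {0}) m"
  shows "multiplicity_mon S = m"
  unfolding multiplicity_mon_def using assms is_inf_cw_unique by blast

lemma is_inf_cw_multiplicity_mon:
  fixes S :: "('d::finite \<Rightarrow> nat) set"
  assumes "S - {0} \<noteq> {}"
  shows "is_inf_cw (S - {0}) (multiplicity_mon S)"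
  using is_inf_cw_pointwise_Inf[OF assms] multiplicity_mon_eqI by metis

lemma fun_add_eq_0_iff:
  fixes a b :: "'d \<Rightarrow> nat"
  shows "a + b = 0 \<longleftrightarrow> a = 0 \<and> b = 0"
  by (auto simp: fun_eq_iff)

lemma fun_le_add_diff_inverse:
  fixes m s :: "'d \<Rightarrow> nat"
  assumes "m \<le> s"
  shows "m + (s - m) = s"
  using assms by (auto simp: le_fun_def fun_eq_iff)

lemma is_inf_cw_add_image:
  fixes a :: "'d::finite \<Rightarrow> nat"
  assumes "0 \<in> T"
  shows "is_inf_cw ((+) a ` T) a"
  unfolding is_inf_cw_def
proof (intro conjI ballI allI impI)
  fix s assume "s \<in> (+) a ` T"
  then show "a \<le> s"
    by (auto simp: le_fun_def)
next
  fix l assume "\<forall>s\<in>(+) a ` T. l \<le> s"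
  then show "l \<le> a"
    using assms by (metis add.right_neutral image_eqI)
qed

lemma multiplicity_mon_shifted_monoid:
  fixes a :: "'d::finite \<Rightarrow> nat"
  assumes T: "submonoid T" and "a \<noteq> 0" and S: "S = (+) a ` T \<union> {0}"
  shows "multiplicity_mon S = a" and "(\<lambda>s. s - a) ` (S - {0}) = T"
proof -
  have S0: "S - {0} = (+) a ` T"
    using S \<open>a \<noteq> 0\<close> by (auto simp: fun_add_eq_0_iff)
  then show "multiplicity_mon S = a"
    using T by (simp add: multiplicity_mon_eqI is_inf_cw_add_image submonoid_def)
  show "(\<lambda>s. s - a) ` (S - {0}) = T"
    unfolding S0 image_image by simp
qed

lemma submonoid_shifted_decomposition:
  fixes S :: "('d::finite \<Rightarrow> nat) set"
  assumes "submonoid S" and m: "m \<in> S - {0}" and inf: "is_inf_cw (S - {0}) m"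
  defines "T \<equiv> (\<lambda>s. s - m) ` (S - {0})"
  shows "m \<in> T" and "S = (+) m ` T \<union> {0}"
proof -
  have shift: "m + (s - m) = s" if "s \<in> S - {0}" for s
    using inf that unfolding is_inf_cw_def by (blast intro: fun_le_add_diff_inverse)
  have "m + m \<in> S - {0}"
    using assms(1) m unfolding submonoid_def by (auto simp: fun_add_eq_0_iff)
  then show "m \<in> T"
    unfolding T_def by (metis add_diff_cancel_left' image_eqI)
  have "(+) m ` T = S - {0}"
    unfolding T_def image_image using shift by simp
  then show "S = (+) m ` T \<union> {0}"
    using assms(1) unfolding submonoid_def by blast
qed

theorem proposition5p5:
  fixes S :: "('d::finite \<Rightarrow> nat) set"
  assumes "submonoid S"
  shows "PI_monoid S \<longleftrightarrow>
    (multiplicity_mon S \<in> S - {0} \<and>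
     submonoid ((\<lambda>s. s - multiplicity_mon S) ` (S - {0})))"
proof
  assume "PI_monoid S"
  then obtain T a where T: "submonoid T" "a \<in> T" "a \<noteq> 0" and S: "S = (+) a ` T \<union> {0}"
    unfolding PI_monoid_def by blast
  note m = multiplicity_mon_shifted_monoid[OF T(1,3) S]
  have "a \<in> S - {0}"
    using T S unfolding submonoid_def by force
  then show "multiplicity_mon S \<in> S - {0} \<and>
      submonoid ((\<lambda>s. s - multiplicity_mon S) ` (S - {0}))"
    using m T(1) by simp
next
  assume h: "multiplicity_mon S \<in> S - {0} \<and>
      submonoid ((\<lambda>s. s - multiplicity_mon S) ` (S - {0}))"
  then have "is_inf_cw (S - {0}) (multiplicity_mon S)"
    by (blast intro: is_inf_cw_multiplicity_mon)
  note decomposition = submonoid_shifted_decomposition[OF assms _ this]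
  show "PI_monoid S"
    unfolding PI_monoid_def using h decomposition by blast
qed

end
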